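(* Let $\kappa\in\{-1,0,1\}$ and let $\mathbb{M}^3(\kappa)$ be represented as $\mathbb{R}^3$ (for $\kappa=0$), $\{x_3>0\}$ (for $\kappa=-1$) or $\mathbb{R}^3$ identified with $\mathbb{S}^3$ minus a point (for $\kappa=1$), with metric $g_\kappa=\eta_\kappa(x)(dx_1^2+dx_2^2+dx_3^2)$, where $\eta_{-1}=1/x_3^2$, $\eta_0=1$, $\eta_1=4/(1+x_1^2+x_2^2+x_3^2)^2$. Let $E$ be the end of revolution $f(s,\theta)=(\gamma_1(s)\cos\theta,\gamma_1(s)\sin\theta,\gamma_2(s))$, $s\in[0,\infty)$, $\theta\in[0,2\pi]$, where $\gamma(s)=(\gamma_1(s),0,\gamma_2(s))$ is a regular curve parametrized by arc length with respect to $g_\kappa$ and $\gamma_1>0$. Define $w_{-1}=\gamma_1/\gamma_2$, $w_0=\gamma_1$, $w_1=\frac{2\gamma_1}{1+\gamma_1^2+\gamma_2^2}$. If $\int^\infty\frac{t\,dt}{\int_0^t w_\kappa(s)\,ds}=\infty$, then $E$ is parabolic.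
   Context: $E$ carries the metric induced by the immersion $f$, which equals $ds^2+w_\kappa(s)^2d\theta^2$. An end is parabolic if every bounded harmonic function on it is determined by its boundary values. *)

theory Defs
  imports "HOL-Analysis.Analysis"
begin

definition eta :: "int \<Rightarrow> real \<Rightarrow> real \<Rightarrow> real \<Rightarrow> real" where
  "eta \<kappa> x1 x2 x3 =
     (if \<kappa> = -1 then 1 / x3^2
      else if \<kappa> = 0 then 1
      else 4 / (1 + x1^2 + x2^2 + x3^2)^2)"

text \<open>The warping function w_kappa of the induced metric ds^2 + w_kappa(s)^2 dtheta^2.\<close>
definition wk :: "int \<Rightarrow> (real \<Rightarrow> real) \<Rightarrow> (real \<Rightarrow> real) \<Rightarrow> real \<Rightarrow> real" where
  "wk \<kappa> g1 g2 s =
     (if \<kappa> = -1 then g1 s / g2 s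
      else if \<kappa> = 0 then g1 s
      else 2 * g1 s / (1 + (g1 s)^2 + (g2 s)^2))"

definition smooth_on :: "real set \<Rightarrow> (real \<Rightarrow> real) \<Rightarrow> (nat \<Rightarrow> real \<Rightarrow> real) \<Rightarrow> bool" where
  "smooth_on S g D \<longleftrightarrow> D 0 = g \<and>
     (\<forall>n. \<forall>x\<in>S. (D n has_real_derivative D (Suc n) x) (at x within S))"

text \<open>The end E = [0,\<infinity>) \<times> (R / 2\<pi>Z) in coordinates (s,\<theta>); functions on E are
  functions of (s,\<theta>), 2\<pi>-periodic in \<theta>. Harmonic on the interior s > 0 w.r.t. the metric
  ds^2 + w(s)^2 d\<theta>^2: u is C^2 and
  Delta u = (1/w) d/ds (w du/ds) + (1/w^2) d^2u/d\<theta>^2 = 0.\<close>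
definition harmonic_end :: "(real \<Rightarrow> real) \<Rightarrow> (real \<times> real \<Rightarrow> real) \<Rightarrow> bool" where
  "harmonic_end w u \<longleftrightarrow>
    (\<exists>us ut uss ust utt.
       continuous_on ({0<..} \<times> UNIV) us \<and> continuous_on ({0<..} \<times> UNIV) ut \<and>
       continuous_on ({0<..} \<times> UNIV) uss \<and> continuous_on ({0<..} \<times> UNIV) ust \<and>
       continuous_on ({0<..} \<times> UNIV) utt \<and>
       (\<forall>s>0. \<forall>\<theta>.
          ((\<lambda>r. u (r, \<theta>)) has_real_derivative us (s, \<theta>)) (at s) \<and>
          ((\<lambda>t. u (s, t)) has_real_derivative ut (s, \<theta>)) (at \<theta>) \<and>
          ((\<lambda>r. us (r, \<theta>)) has_real_derivative uss (s, \<theta>)) (at s) \<and>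
          ((\<lambda>t. us (s, t)) has_real_derivative ust (s, \<theta>)) (at \<theta>) \<and>
          ((\<lambda>r. ut (r, \<theta>)) has_real_derivative ust (s, \<theta>)) (at s) \<and>
          ((\<lambda>t. ut (s, t)) has_real_derivative utt (s, \<theta>)) (at \<theta>) \<and>
          ((\<lambda>r. w r * us (r, \<theta>)) has_real_derivative (- utt (s, \<theta>) / w s)) (at s)))"

definition bdd_harmonic_end :: "(real \<Rightarrow> real) \<Rightarrow> (real \<times> real \<Rightarrow> real) \<Rightarrow> bool" where
  "bdd_harmonic_end w u \<longleftrightarrow>
     continuous_on ({0..} \<times> UNIV) u \<and>
     (\<forall>s\<ge>0. \<forall>\<theta>. u (s, \<theta> + 2 * pi) = u (s, \<theta>)) \<and>
     bounded (u ` ({0..} \<times> UNIV)) \<and>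
     harmonic_end w u"

definition parabolic_end :: "(real \<Rightarrow> real) \<Rightarrow> bool" where
  "parabolic_end w \<longleftrightarrow>
     (\<forall>u v. bdd_harmonic_end w u \<longrightarrow> bdd_harmonic_end w v \<longrightarrow>
        (\<forall>\<theta>. u (0, \<theta>) = v (0, \<theta>)) \<longrightarrow>
        (\<forall>s\<ge>0. \<forall>\<theta>. u (s, \<theta>) = v (s, \<theta>)))"

end

theory Submission
  imports Defs
begin

(* A bounded harmonic function u on the end with u = 0 on the boundary circle is \<le> 0 (apply this
   to \<plusminus>(u - v)). The radial function \<Phi>(s) = \<integral>\<^sub>0\<^sup>s 1/w is harmonic; if it is unbounded, then for
   small \<epsilon> > 0 and large R the function u - \<epsilon>\<Phi> + \<delta>\<Psi>, with \<Psi> strictly subharmonic and \<delta> tiny, is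
   positive somewhere, vanishes at s = 0 and is negative at s = R, so it has an interior maximum on
   [0,R] \<times> S\<^sup>1, which strict subharmonicity forbids.
   Unboundedness of \<Phi> follows from the divergence hypothesis: Cauchy-Schwarz on [x/2, x] gives
   t / \<integral>\<^sub>0\<^sup>t w \<le> 8 (\<Phi>(x) - \<Phi>(x/2)) / x for t \<in> [x, 2x], and summing over dyadic blocks bounds
   \<integral>\<^sub>1\<^sup>\<infinity> t / \<integral>\<^sub>0\<^sup>t w by 8 sup \<Phi>. *)

lemma smooth_on_imp_continuous_on:
  assumes "smooth_on S g D"
  shows "continuous_on S g"
proof -
  have "D 0 = g" and "\<forall>x\<in>S. (D 0 has_real_derivative D 1 x) (at x within S)"
    using assms unfolding smooth_on_def by auto
  then show ?thesis
    unfolding continuous_on_eq_continuous_within by (auto dest: DERIV_continuous)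
qed

lemma periodic_value_in_period:
  fixes f :: "real \<Rightarrow> 'a"
  assumes p: "0 < p" and periodic: "\<And>x. f (x + p) = f x"
  shows "\<exists>y\<in>{0..p}. f x = f y"
proof -
  have shift: "f (y + real n * p) = f y" for y n
  proof (induction n)
    case (Suc n)
    have "f (y + real (Suc n) * p) = f (y + real n * p + p)"
      by (simp add: algebra_simps)
    then show ?case using Suc periodic by simp
  qed simp
  define k where "k = \<lfloor>x / p\<rfloor>"
  define y where "y = x - of_int k * p"
  have "of_int k \<le> x / p" "x / p < of_int k + 1"
    unfolding k_def by linarith+
  then have "y \<in> {0..p}"
    using p unfolding y_def by (auto simp: field_simps)
  moreover have "f x = f y"
  proof (cases "k \<ge> 0")
    case True
    then show ?thesis using shift[of y "nat k"] unfolding y_def by simp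
  next
    case False
    then show ?thesis using shift[of x "nat (- k)"] unfolding y_def by simp
  qed
  ultimately show ?thesis by blast
qed

lemma periodic_attains_sup:
  fixes f :: "real \<times> real \<Rightarrow> real"
  assumes cont: "continuous_on ({a..b} \<times> UNIV) f" and "a \<le> b"
    and periodic: "\<And>s \<theta>. s \<in> {a..b} \<Longrightarrow> f (s, \<theta> + 2 * pi) = f (s, \<theta>)"
  shows "\<exists>s0\<in>{a..b}. \<exists>\<theta>0. \<forall>s\<in>{a..b}. \<forall>\<theta>. f (s, \<theta>) \<le> f (s0, \<theta>0)"
proof -
  let ?K = "{a..b} \<times> {0..2 * pi}"
  have "continuous_on ?K f"
    using cont by (rule continuous_on_subset) auto
  moreover have "compact ?K" "?K \<noteq> {}"
    using \<open>a \<le> b\<close> by (auto intro: compact_Times)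
  ultimately obtain p0 where p0: "p0 \<in> ?K" "\<And>q. q \<in> ?K \<Longrightarrow> f q \<le> f p0"
    using continuous_attains_sup by metis
  have "f (s, \<theta>) \<le> f p0" if s: "s \<in> {a..b}" for s \<theta>
  proof -
    obtain t where "t \<in> {0..2 * pi}" "f (s, \<theta>) = f (s, t)"
      using periodic_value_in_period[of "2 * pi" "\<lambda>t. f (s, t)" \<theta>] periodic[OF s] by auto
    then show ?thesis using p0(2)[of "(s, t)"] s by auto
  qed
  then show ?thesis using p0(1) by (cases p0) fastforce
qed

lemma weighted_derivative_pos_imp_not_local_max:
  fixes f f' p :: "real \<Rightarrow> real"
  assumes "a < x0" "x0 < b"
    and f': "\<And>x. x \<in> {a<..<b} \<Longrightarrow> (f has_real_derivative f' x) (at x)"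
    and p: "\<And>x. x \<in> {a<..<b} \<Longrightarrow> 0 < p x"
    and pf': "((\<lambda>x. p x * f' x) has_real_derivative c) (at x0)" and "0 < c"
    and max: "\<And>x. x \<in> {a<..<b} \<Longrightarrow> f x \<le> f x0"
  shows False
proof -
  have "(f has_real_derivative f' x0) (at x0)"
    using f' assms by simp
  then have "f' x0 = 0"
    by (rule DERIV_local_max[of _ _ _ "min (x0 - a) (b - x0)"])
      (use assms in \<open>auto simp: abs_less_iff\<close>)
  then obtain d where d: "0 < d" "\<And>h. 0 < h \<Longrightarrow> h < d \<Longrightarrow> 0 < p (x0 + h) * f' (x0 + h)"
    using DERIV_pos_inc_right[OF pf' \<open>0 < c\<close>] by auto
  define h where "h = min d (b - x0) / 2"
  have h: "0 < h" "h < d" "x0 + h < b"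
    using d(1) \<open>x0 < b\<close> unfolding h_def by (auto simp: min_def field_simps)
  have "f x0 < f (x0 + h)"
  proof (rule DERIV_pos_imp_increasing_open[of x0 "x0 + h" f])
    show "x0 < x0 + h"
      using h by simp
  next
    fix x assume x: "x0 < x" "x < x0 + h"
    have "0 < p x" "0 < p x * f' x"
      using d(2)[of "x - x0"] p[of x] x h assms by auto
    then have "0 < f' x"
      by (simp add: zero_less_mult_iff)
    moreover have "(f has_real_derivative f' x) (at x)"
      using f' x h assms by simp
    ultimately show "\<exists>y. (f has_real_derivative y) (at x) \<and> 0 < y"
      by blast
  next
    show "continuous_on {x0..x0 + h} f"
      using f' h assms by (intro continuous_at_imp_continuous_on ballI DERIV_isCont) force
  qed
  moreover have "f (x0 + h) \<le> f x0"
    using max h assms by simp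
  ultimately show False
    by simp
qed

lemma has_real_derivative_integral_from_0:
  fixes f :: "real \<Rightarrow> real"
  assumes "continuous_on {0..} f" and "0 < r"
  shows "((\<lambda>s. integral {0..s} f) has_real_derivative f r) (at r)"
proof -
  have "((\<lambda>s. integral {0..s} f) has_real_derivative f r) (at r within {0..r + 1})"
    by (rule integral_has_real_derivative) (use assms in \<open>auto intro: continuous_on_subset\<close>)
  moreover have "at r within {0..r + 1} = at r"
    by (rule at_within_interior) (use assms in auto)
  ultimately show ?thesis
    by simp
qed

lemma continuous_on_integral_from_0:
  fixes f :: "real \<Rightarrow> real"
  assumes "continuous_on {0..} f"
  shows "continuous_on {0..} (\<lambda>s. integral {0..s} f)"
  unfolding continuous_on_eq_continuous_within
proof
  fix x :: real
  assume "x \<in> {0..}"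
  have "continuous_on {0..x + 1} (\<lambda>s. integral {0..s} f)"
    by (intro indefinite_integral_continuous_1 integrable_continuous_real)
      (use assms in \<open>auto intro: continuous_on_subset\<close>)
  then have "continuous (at x within {0..x + 1}) (\<lambda>s. integral {0..s} f)"
    using \<open>x \<in> {0..}\<close> by (simp add: continuous_on_eq_continuous_within)
  moreover have "at x within {0..x + 1} = at x within {0..}"
    by (rule at_within_nhd[of _ "{..<x + 1}"]) auto
  ultimately show "continuous (at x within {0..}) (\<lambda>s. integral {0..s} f)"
    by simp
qed

lemma square_length_le_integral_mult_integral_inverse:
  fixes f :: "real \<Rightarrow> real"
  assumes cont: "continuous_on {a..b} f" and pos: "\<And>x. x \<in> {a..b} \<Longrightarrow> 0 < f x" and "a < b"
  shows "(b - a)\<^sup>2 \<le> integral {a..b} f * integral {a..b} (\<lambda>x. 1 / f x)"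
proof -
  define I J where "I = integral {a..b} f" and "J = integral {a..b} (\<lambda>x. 1 / f x)"
  have cont_inverse: "continuous_on {a..b} (\<lambda>x. 1 / f x)"
    using cont pos by (intro continuous_intros) (auto simp: less_imp_neq[symmetric])
  have am_gm: "2 * l * (b - a) \<le> I + l\<^sup>2 * J" if "0 < l" for l
  proof -
    have "integral {a..b} (\<lambda>x. 2 * l) \<le> integral {a..b} (\<lambda>x. f x + l\<^sup>2 * (1 / f x))"
    proof (rule integral_le)
      fix x
      assume "x \<in> {a..b}"
      then have "0 < f x"
        by (rule pos)
      then have "0 \<le> (f x - l)\<^sup>2 / f x"
        by simp
      also have "\<dots> = f x + l\<^sup>2 * (1 / f x) - 2 * l"
        using \<open>0 < f x\<close> by (simp add: field_simps power2_eq_square)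
      finally show "2 * l \<le> f x + l\<^sup>2 * (1 / f x)"
        by simp
    qed (intro integrable_continuous_real continuous_on_add continuous_on_mult
        continuous_on_const cont cont_inverse)+
    also have "\<dots> = I + integral {a..b} (\<lambda>x. l\<^sup>2 * (1 / f x))"
      unfolding I_def
      by (intro integral_add integrable_continuous_real continuous_on_mult continuous_on_const
          cont cont_inverse)
    also have "\<dots> = I + l\<^sup>2 * J"
      unfolding J_def by (simp only: integral_mult_right)
    finally show ?thesis
      using \<open>a < b\<close> by (simp add: algebra_simps)
  qed
  have "0 \<le> J"
    unfolding J_def using pos by (intro integral_nonneg integrable_continuous_real cont_inverse) force+
  moreover have "J \<noteq> 0"
  proof
    assume "J = 0"
    then have "2 * ((\<bar>I\<bar> + 1) / (b - a)) * (b - a) \<le> I"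
      using am_gm[of "(\<bar>I\<bar> + 1) / (b - a)"] \<open>a < b\<close> by simp
    then show False
      using \<open>a < b\<close> by simp
  qed
  ultimately have "0 < J"
    by simp
  then have "2 * ((b - a) / J) * (b - a) \<le> I + ((b - a) / J)\<^sup>2 * J"
    by (intro am_gm divide_pos_pos) (use \<open>a < b\<close> in simp_all)
  moreover have "((b - a) / J)\<^sup>2 * J = (b - a)\<^sup>2 / J"
    and "2 * ((b - a) / J) * (b - a) = 2 * ((b - a)\<^sup>2 / J)"
    using \<open>0 < J\<close> by (simp_all add: power2_eq_square)
  ultimately have "(b - a)\<^sup>2 / J \<le> I"
    by linarith
  then show ?thesis
    using \<open>0 < J\<close> unfolding I_def J_def by (simp add: pos_divide_le_eq)
qed

lemma continuous_on_atLeast_imp_integrable_on: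
  fixes f :: "real \<Rightarrow> real"
  assumes "continuous_on {c..} f" and "c \<le> a"
  shows "f integrable_on {a..b}"
  by (rule integrable_continuous_real, rule continuous_on_subset[OF assms(1)]) (use assms(2) in auto)

lemma real_in_dyadic_interval:
  fixes t :: real
  assumes "1 \<le> t"
  shows "\<exists>k::nat. 2 ^ k \<le> t \<and> t < 2 ^ (k + 1)"
proof -
  have ex: "\<exists>n. t < (2::real) ^ n"
    by (rule real_arch_pow) simp
  define n where "n = (LEAST n. t < (2::real) ^ n)"
  have "t < 2 ^ n"
    unfolding n_def by (rule LeastI_ex[OF ex])
  moreover obtain k where k: "n = Suc k"
    using \<open>t < 2 ^ n\<close> assms by (cases n) auto
  moreover have "\<not> t < 2 ^ k"
    unfolding n_def by (rule not_less_Least) (use k n_def in simp)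
  ultimately show ?thesis
    by (intro exI[of _ k]) auto
qed

lemma harmonic_end_diff:
  assumes "harmonic_end w u" and "harmonic_end w v"
  shows "harmonic_end w (\<lambda>p. u p - v p)"
proof -
  obtain us ut uss ust utt where u:
      "continuous_on ({0<..} \<times> UNIV) us" "continuous_on ({0<..} \<times> UNIV) ut"
      "continuous_on ({0<..} \<times> UNIV) uss" "continuous_on ({0<..} \<times> UNIV) ust"
      "continuous_on ({0<..} \<times> UNIV) utt"
    "\<forall>s>0. \<forall>\<theta>.
       ((\<lambda>r. u (r, \<theta>)) has_real_derivative us (s, \<theta>)) (at s) \<and>
       ((\<lambda>t. u (s, t)) has_real_derivative ut (s, \<theta>)) (at \<theta>) \<and>
       ((\<lambda>r. us (r, \<theta>)) has_real_derivative uss (s, \<theta>)) (at s) \<and>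
       ((\<lambda>t. us (s, t)) has_real_derivative ust (s, \<theta>)) (at \<theta>) \<and>
       ((\<lambda>r. ut (r, \<theta>)) has_real_derivative ust (s, \<theta>)) (at s) \<and>
       ((\<lambda>t. ut (s, t)) has_real_derivative utt (s, \<theta>)) (at \<theta>) \<and>
       ((\<lambda>r. w r * us (r, \<theta>)) has_real_derivative (- utt (s, \<theta>) / w s)) (at s)"
    using assms(1) unfolding harmonic_end_def by blast
  obtain vs vt vss vst vtt where v:
      "continuous_on ({0<..} \<times> UNIV) vs" "continuous_on ({0<..} \<times> UNIV) vt"
      "continuous_on ({0<..} \<times> UNIV) vss" "continuous_on ({0<..} \<times> UNIV) vst"
      "continuous_on ({0<..} \<times> UNIV) vtt"
    "\<forall>s>0. \<forall>\<theta>.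
       ((\<lambda>r. v (r, \<theta>)) has_real_derivative vs (s, \<theta>)) (at s) \<and>
       ((\<lambda>t. v (s, t)) has_real_derivative vt (s, \<theta>)) (at \<theta>) \<and>
       ((\<lambda>r. vs (r, \<theta>)) has_real_derivative vss (s, \<theta>)) (at s) \<and>
       ((\<lambda>t. vs (s, t)) has_real_derivative vst (s, \<theta>)) (at \<theta>) \<and>
       ((\<lambda>r. vt (r, \<theta>)) has_real_derivative vst (s, \<theta>)) (at s) \<and>
       ((\<lambda>t. vt (s, t)) has_real_derivative vtt (s, \<theta>)) (at \<theta>) \<and>
       ((\<lambda>r. w r * vs (r, \<theta>)) has_real_derivative (- vtt (s, \<theta>) / w s)) (at s)"
    using assms(2) unfolding harmonic_end_def by blast
  have flux: "((\<lambda>r. w r * (us (r, \<theta>) - vs (r, \<theta>))) has_real_derivative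
      - (utt (s, \<theta>) - vtt (s, \<theta>)) / w s) (at s)" if "0 < s" for s \<theta>
  proof -
    have "((\<lambda>r. w r * us (r, \<theta>) - w r * vs (r, \<theta>)) has_real_derivative
        - utt (s, \<theta>) / w s - - vtt (s, \<theta>) / w s) (at s)"
      using u(6) v(6) that by (intro DERIV_diff) auto
    then show ?thesis
      by (simp add: right_diff_distrib diff_divide_distrib)
  qed
  show ?thesis
    unfolding harmonic_end_def
    by (rule exI[of _ "\<lambda>p. us p - vs p"], rule exI[of _ "\<lambda>p. ut p - vt p"],
        rule exI[of _ "\<lambda>p. uss p - vss p"], rule exI[of _ "\<lambda>p. ust p - vst p"],
        rule exI[of _ "\<lambda>p. utt p - vtt p"])
      (use u v flux in \<open>auto intro!: continuous_on_diff DERIV_diff\<close>)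
qed

lemma bdd_harmonic_end_diff:
  assumes u: "bdd_harmonic_end w u" and v: "bdd_harmonic_end w v"
  shows "bdd_harmonic_end w (\<lambda>p. u p - v p)"
proof -
  obtain Mu Mv where Mu: "\<And>p. p \<in> {0..} \<times> UNIV \<Longrightarrow> norm (u p) \<le> Mu"
    and Mv: "\<And>p. p \<in> {0..} \<times> UNIV \<Longrightarrow> norm (v p) \<le> Mv"
    using u v unfolding bdd_harmonic_end_def bounded_iff by (meson image_eqI)
  have "norm (u p - v p) \<le> Mu + Mv" if "p \<in> {0..} \<times> UNIV" for p
    using norm_triangle_ineq4[of "u p" "v p"] Mu[OF that] Mv[OF that] by linarith
  then have "bounded ((\<lambda>p. u p - v p) ` ({0..} \<times> UNIV))"
    unfolding bounded_iff by blast
  then show ?thesis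
    using u v harmonic_end_diff unfolding bdd_harmonic_end_def by (auto intro: continuous_on_diff)
qed

locale warped_end =
  fixes w :: "real \<Rightarrow> real"
  assumes continuous_w: "continuous_on {0..} w"
    and w_pos: "\<And>s. 0 \<le> s \<Longrightarrow> 0 < w s"
begin

(* With end_area s the area of [0,s] \<times> S^1 divided by 2\<pi>, the radial functions \<Phi> = radial_harmonic
   and \<Psi> = radial_subharmonic satisfy (w \<Phi>')' = 0 and (w \<Psi>')' = w > 0: \<Phi> is harmonic and \<Psi>
   strictly subharmonic on the end. *)

definition end_area :: "real \<Rightarrow> real" where
  "end_area s = integral {0..s} w"

definition radial_harmonic :: "real \<Rightarrow> real" where
  "radial_harmonic s = integral {0..s} (\<lambda>r. 1 / w r)"

definition radial_subharmonic :: "real \<Rightarrow> real" where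
  "radial_subharmonic s = integral {0..s} (\<lambda>r. end_area r / w r)"

definition perturbed :: "real \<Rightarrow> real \<Rightarrow> (real \<times> real \<Rightarrow> real) \<Rightarrow> real \<times> real \<Rightarrow> real" where
  "perturbed \<epsilon> \<delta> u p = u p - \<epsilon> * radial_harmonic (fst p) + \<delta> * radial_subharmonic (fst p)"

lemma w_nonneg: "0 \<le> s \<Longrightarrow> 0 \<le> w s"
  using w_pos[of s] by simp

lemma continuous_on_inverse_w: "continuous_on {0..} (\<lambda>r. 1 / w r)"
  using continuous_w w_pos by (intro continuous_intros) (auto simp: less_imp_neq[symmetric])

lemma continuous_on_end_area: "continuous_on {0..} end_area"
  unfolding end_area_def by (rule continuous_on_integral_from_0[OF continuous_w])

lemma continuous_on_end_area_div_w: "continuous_on {0..} (\<lambda>r. end_area r / w r)"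
  using continuous_on_end_area continuous_w w_pos
  by (intro continuous_intros) (auto simp: less_imp_neq[symmetric])

lemma continuous_on_radial_harmonic: "continuous_on {0..} radial_harmonic"
  unfolding radial_harmonic_def by (rule continuous_on_integral_from_0[OF continuous_on_inverse_w])

lemma continuous_on_radial_subharmonic: "continuous_on {0..} radial_subharmonic"
  unfolding radial_subharmonic_def
  by (rule continuous_on_integral_from_0[OF continuous_on_end_area_div_w])

lemma has_real_derivative_end_area: "0 < r \<Longrightarrow> (end_area has_real_derivative w r) (at r)"
  unfolding end_area_def by (rule has_real_derivative_integral_from_0[OF continuous_w])

lemma has_real_derivative_radial_harmonic:
  "0 < r \<Longrightarrow> (radial_harmonic has_real_derivative 1 / w r) (at r)"
  unfolding radial_harmonic_def
  by (rule has_real_derivative_integral_from_0[OF continuous_on_inverse_w])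

lemma has_real_derivative_radial_subharmonic:
  "0 < r \<Longrightarrow> (radial_subharmonic has_real_derivative end_area r / w r) (at r)"
  unfolding radial_subharmonic_def
  by (rule has_real_derivative_integral_from_0[OF continuous_on_end_area_div_w])

lemma integrable_on_w: "0 \<le> a \<Longrightarrow> w integrable_on {a..b}"
  by (rule continuous_on_atLeast_imp_integrable_on[OF continuous_w])

lemma integrable_on_inverse_w: "0 \<le> a \<Longrightarrow> (\<lambda>r. 1 / w r) integrable_on {a..b}"
  by (rule continuous_on_atLeast_imp_integrable_on[OF continuous_on_inverse_w])

lemma end_area_nonneg: "0 \<le> end_area s"
  unfolding end_area_def
  by (rule integral_nonneg[OF integrable_on_w]) (auto simp: w_nonneg)

lemma radial_harmonic_nonneg: "0 \<le> radial_harmonic s"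
  unfolding radial_harmonic_def
  by (rule integral_nonneg[OF integrable_on_inverse_w]) (auto simp: w_nonneg)

lemma radial_subharmonic_nonneg: "0 \<le> radial_subharmonic s"
  unfolding radial_subharmonic_def
  using continuous_on_atLeast_imp_integrable_on[OF continuous_on_end_area_div_w]
  by (rule integral_nonneg) (auto intro: divide_nonneg_pos end_area_nonneg w_pos)

lemma end_area_diff: "0 \<le> a \<Longrightarrow> a \<le> b \<Longrightarrow> end_area b - end_area a = integral {a..b} w"
  unfolding end_area_def
  using Henstock_Kurzweil_Integration.integral_combine[OF _ _ integrable_on_w, of 0 a b] by simp

lemma radial_harmonic_diff:
  "0 \<le> a \<Longrightarrow> a \<le> b \<Longrightarrow> radial_harmonic b - radial_harmonic a = integral {a..b} (\<lambda>r. 1 / w r)"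
  unfolding radial_harmonic_def
  using Henstock_Kurzweil_Integration.integral_combine[OF _ _ integrable_on_inverse_w, of 0 a b]
  by simp

lemma end_area_mono: "0 \<le> a \<Longrightarrow> a \<le> b \<Longrightarrow> end_area a \<le> end_area b"
  using end_area_diff[of a b] integral_nonneg[OF integrable_on_w, of a b] w_nonneg by force

lemma radial_harmonic_mono: "a \<le> b \<Longrightarrow> radial_harmonic a \<le> radial_harmonic b"
  unfolding radial_harmonic_def
  by (rule integral_subset_le) (auto intro: integrable_on_inverse_w simp: w_nonneg)

lemma div_end_area_le_radial_harmonic_increment:
  assumes "0 < x" "x \<le> t" "t \<le> 2 * x"
  shows "t / end_area t \<le> 8 * (radial_harmonic x - radial_harmonic (x / 2)) / x"
proof -
  define I D where "I = end_area x - end_area (x / 2)"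
    and "D = radial_harmonic x - radial_harmonic (x / 2)"
  have "(x - x / 2)\<^sup>2 \<le> integral {x / 2..x} w * integral {x / 2..x} (\<lambda>r. 1 / w r)"
    by (rule square_length_le_integral_mult_integral_inverse)
      (use assms(1) in \<open>auto intro: continuous_on_subset[OF continuous_w] w_pos\<close>)
  then have ID: "(x / 2)\<^sup>2 \<le> I * D"
    unfolding I_def D_def using assms(1) by (simp add: end_area_diff radial_harmonic_diff)
  have "0 \<le> I" "0 \<le> D"
    unfolding I_def D_def using assms(1) by (simp_all add: end_area_mono radial_harmonic_mono)
  with ID assms(1) have "0 < I" "0 < D"
    by (auto simp: order_le_less)
  have "I \<le> end_area t"
    using end_area_mono[of x t] end_area_nonneg[of "x / 2"] assms unfolding I_def by simp
  then have "t / end_area t \<le> 2 * x / I"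
    using \<open>0 < I\<close> assms by (intro frac_le) auto
  also have "\<dots> = 2 * x * D / (I * D)"
    using \<open>0 < D\<close> by simp
  also have "\<dots> \<le> 2 * x * D / (x / 2)\<^sup>2"
    using ID \<open>0 < D\<close> \<open>0 < I\<close> assms(1) by (intro divide_left_mono) auto
  also have "\<dots> = 8 * D / x"
    using assms(1) by (simp add: field_simps power2_eq_square)
  finally show ?thesis
    unfolding D_def .
qed

lemma nn_integral_div_end_area_le:
  assumes bound: "\<And>R. radial_harmonic R \<le> B"
  shows "(\<integral>\<^sup>+ t\<in>{1..}. ennreal (t / end_area t) \<partial>lborel) \<le> ennreal (8 * B)"
proof -
  define \<Delta> where "\<Delta> k = radial_harmonic (2 ^ k) - radial_harmonic (2 ^ k / 2)" for k :: nat
  define g where "g k t = ennreal (8 * \<Delta> k / 2 ^ k) * indicator {(2::real) ^ k..<2 ^ (k + 1)} t"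
    for k t
  have \<Delta>_nonneg: "0 \<le> \<Delta> k" for k
    unfolding \<Delta>_def by (simp add: radial_harmonic_mono)
  have "ennreal (t / end_area t) * indicator {1..} t \<le> (\<Sum>k. g k t)" for t
  proof (cases "1 \<le> t")
    case True
    then obtain k :: nat where k: "2 ^ k \<le> t" "t < 2 ^ (k + 1)"
      using real_in_dyadic_interval by blast
    have "t / end_area t \<le> 8 * \<Delta> k / 2 ^ k"
      unfolding \<Delta>_def by (rule div_end_area_le_radial_harmonic_increment) (use k in auto)
    then have "ennreal (t / end_area t) * indicator {1..} t \<le> ennreal (8 * \<Delta> k / 2 ^ k)"
      using True by (simp add: ennreal_leI)
    also have "\<dots> = g k t"
      unfolding g_def using k by simp
    also have "\<dots> \<le> (\<Sum>k. g k t)"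
      using sum_le_suminf[of "\<lambda>k. g k t" "{k}"] by simp
    finally show ?thesis .
  qed simp
  then have "(\<integral>\<^sup>+ t\<in>{1..}. ennreal (t / end_area t) \<partial>lborel) \<le> (\<integral>\<^sup>+ t. (\<Sum>k. g k t) \<partial>lborel)"
    by (intro nn_integral_mono) (simp add: mult.commute)
  also have "\<dots> = (\<Sum>k. \<integral>\<^sup>+ t. g k t \<partial>lborel)"
    by (rule nn_integral_suminf) (simp add: g_def)
  also have "\<dots> = (\<Sum>k. ennreal (8 * \<Delta> k))"
  proof (rule suminf_cong)
    fix k :: nat
    have "(\<integral>\<^sup>+ t. g k t \<partial>lborel) = ennreal (8 * \<Delta> k / 2 ^ k) * ennreal (2 ^ k)"
      unfolding g_def by (subst nn_integral_cmult_indicator) simp_all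
    then show "(\<integral>\<^sup>+ t. g k t \<partial>lborel) = ennreal (8 * \<Delta> k)"
      using \<Delta>_nonneg[of k] by (simp add: ennreal_mult[symmetric])
  qed
  also have "\<dots> \<le> ennreal (8 * B)"
  proof (rule suminf_le_const)
    fix n
    have "(\<Sum>k<n. \<Delta> k) = radial_harmonic (2 ^ n / 2) - radial_harmonic (1 / 2)"
      unfolding \<Delta>_def using sum_lessThan_telescope[of "\<lambda>k. radial_harmonic (2 ^ k / 2)" n] by simp
    also have "\<dots> \<le> B"
      using bound[of "2 ^ n / 2"] radial_harmonic_nonneg[of "1 / 2"] by simp
    finally have "(\<Sum>k<n. 8 * \<Delta> k) \<le> 8 * B"
      by (simp add: sum_distrib_left[symmetric])
    then show "(\<Sum>k<n. ennreal (8 * \<Delta> k)) \<le> ennreal (8 * B)"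
      by (subst sum_ennreal) (use \<Delta>_nonneg in \<open>auto intro: ennreal_leI\<close>)
  qed (rule summableI)
  finally show ?thesis .
qed

lemma radial_harmonic_unbounded:
  assumes "(\<integral>\<^sup>+ t\<in>{1..}. ennreal (t / end_area t) \<partial>lborel) = \<infinity>"
  shows "\<not> bdd_above (range radial_harmonic)"
proof
  assume "bdd_above (range radial_harmonic)"
  then obtain B where "\<And>R. radial_harmonic R \<le> B"
    by (auto simp: bdd_above_def)
  then have "(\<integral>\<^sup>+ t\<in>{1..}. ennreal (t / end_area t) \<partial>lborel) \<le> ennreal (8 * B)"
    by (rule nn_integral_div_end_area_le)
  then show False
    unfolding assms infinity_ennreal_def using ennreal_less_top[of "8 * B"] by (meson leD)
qed

lemma perturbed_harmonic_no_interior_max: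
  assumes harmonic: "harmonic_end w u" and "0 < \<delta>" and s0: "0 < s0" "s0 < b"
    and max: "\<And>s \<theta>. s \<in> {0<..<b} \<Longrightarrow> perturbed \<epsilon> \<delta> u (s, \<theta>) \<le> perturbed \<epsilon> \<delta> u (s0, \<theta>0)"
  shows False
proof -
  obtain us ut utt where
    radial: "\<And>s \<theta>. 0 < s \<Longrightarrow> ((\<lambda>r. u (r, \<theta>)) has_real_derivative us (s, \<theta>)) (at s)"
    and angular: "\<And>s \<theta>. 0 < s \<Longrightarrow> ((\<lambda>t. u (s, t)) has_real_derivative ut (s, \<theta>)) (at \<theta>)"
    and angular2: "\<And>s \<theta>. 0 < s \<Longrightarrow> ((\<lambda>t. ut (s, t)) has_real_derivative utt (s, \<theta>)) (at \<theta>)"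
    and flux: "\<And>s \<theta>. 0 < s \<Longrightarrow>
      ((\<lambda>r. w r * us (r, \<theta>)) has_real_derivative - utt (s, \<theta>) / w s) (at s)"
    using harmonic unfolding harmonic_end_def by blast
  (* Along the ray \<theta> = \<theta>0 the radial derivative F' of the perturbed function satisfies
     (w F')' = - u\<^sub>\<theta>\<^sub>\<theta> / w + \<delta> w, which is positive at s0 since u\<^sub>\<theta>\<^sub>\<theta> \<le> 0 at a maximum in \<theta>. *)
  have "utt (s0, \<theta>0) \<le> 0"
  proof (rule ccontr)
    assume "\<not> utt (s0, \<theta>0) \<le> 0"
    moreover have "u (s0, t) \<le> u (s0, \<theta>0)" for t
      using max[of s0 t] s0 by (simp add: perturbed_def)
    ultimately show False
      using angular angular2 s0
      by (intro weighted_derivative_pos_imp_not_local_max[of "\<theta>0 - 1" \<theta>0 "\<theta>0 + 1"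
            "\<lambda>t. u (s0, t)" "\<lambda>t. ut (s0, t)" "\<lambda>_. 1" "utt (s0, \<theta>0)"]) auto
  qed
  define F' where "F' r = us (r, \<theta>0) - \<epsilon> * (1 / w r) + \<delta> * (end_area r / w r)" for r
  have "((\<lambda>r. w r * us (r, \<theta>0) - \<epsilon> + \<delta> * end_area r) has_real_derivative
      - utt (s0, \<theta>0) / w s0 + \<delta> * w s0) (at s0)"
    using DERIV_add[OF DERIV_diff[OF flux[OF s0(1)] DERIV_const]
        DERIV_cmult[OF has_real_derivative_end_area[OF s0(1)]]]
    by simp
  then have flux_F': "((\<lambda>r. w r * F' r) has_real_derivative - utt (s0, \<theta>0) / w s0 + \<delta> * w s0) (at s0)"
    by (rule has_field_derivative_transform_within_open[where S = "{0<..}"])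
      (use s0 w_pos in \<open>auto simp: F'_def field_simps less_imp_neq[symmetric]\<close>)
  have flux_F'_pos: "0 < - utt (s0, \<theta>0) / w s0 + \<delta> * w s0"
    using \<open>utt (s0, \<theta>0) \<le> 0\<close> \<open>0 < \<delta>\<close> w_pos[of s0] s0
    by (intro add_nonneg_pos) (auto simp: divide_nonpos_pos)
  have F': "((\<lambda>r. perturbed \<epsilon> \<delta> u (r, \<theta>0)) has_real_derivative F' r) (at r)"
    if "r \<in> {0<..<b}" for r
    unfolding F'_def perturbed_def fst_conv using that radial has_real_derivative_radial_harmonic
      has_real_derivative_radial_subharmonic
    by (intro DERIV_add DERIV_diff DERIV_cmult) auto
  have "0 < w r" if "r \<in> {0<..<b}" for r
    using w_pos that by simp
  from weighted_derivative_pos_imp_not_local_max[OF s0 F' this flux_F' flux_F'_pos max]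
  show False .
qed

lemma perturbed_attains_sup:
  assumes u: "bdd_harmonic_end w u" and "0 \<le> R"
  obtains s0 \<theta>0 where "s0 \<in> {0..R}"
    and "\<And>s \<theta>. s \<in> {0..R} \<Longrightarrow> perturbed \<epsilon> \<delta> u (s, \<theta>) \<le> perturbed \<epsilon> \<delta> u (s0, \<theta>0)"
proof -
  have "continuous_on ({0..R} \<times> UNIV) (\<lambda>p. radial_harmonic (fst p))"
    and "continuous_on ({0..R} \<times> UNIV) (\<lambda>p. radial_subharmonic (fst p))"
    by (auto intro!: continuous_on_compose2[OF continuous_on_radial_harmonic]
        continuous_on_compose2[OF continuous_on_radial_subharmonic] continuous_intros)
  moreover have "continuous_on ({0..R} \<times> UNIV) u"
    using u unfolding bdd_harmonic_end_def by (auto elim: continuous_on_subset)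
  ultimately have "continuous_on ({0..R} \<times> UNIV) (perturbed \<epsilon> \<delta> u)"
    unfolding perturbed_def by (intro continuous_intros)
  moreover have "perturbed \<epsilon> \<delta> u (s, \<theta> + 2 * pi) = perturbed \<epsilon> \<delta> u (s, \<theta>)"
    if "s \<in> {0..R}" for s \<theta>
    using u that unfolding bdd_harmonic_end_def perturbed_def by simp
  ultimately have "\<exists>s0\<in>{0..R}. \<exists>\<theta>0. \<forall>s\<in>{0..R}. \<forall>\<theta>.
      perturbed \<epsilon> \<delta> u (s, \<theta>) \<le> perturbed \<epsilon> \<delta> u (s0, \<theta>0)"
    using \<open>0 \<le> R\<close> by (intro periodic_attains_sup) auto
  then show ?thesis
    using that by blast
qed

lemma bdd_harmonic_end_nonpos:
  assumes unbounded: "\<not> bdd_above (range radial_harmonic)"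
    and u: "bdd_harmonic_end w u" and boundary: "\<And>\<theta>. u (0, \<theta>) = 0" and "0 \<le> s1"
  shows "u (s1, \<theta>1) \<le> 0"
proof (rule ccontr)
  assume "\<not> u (s1, \<theta>1) \<le> 0"
  then have "0 < u (s1, \<theta>1)"
    by simp
  obtain M where M: "\<And>p. p \<in> {0..} \<times> UNIV \<Longrightarrow> norm (u p) \<le> M"
    using u unfolding bdd_harmonic_end_def bounded_iff by (meson image_eqI)
  define \<epsilon> where "\<epsilon> = u (s1, \<theta>1) / (radial_harmonic s1 + 1)"
  have "0 < \<epsilon>" "\<epsilon> * radial_harmonic s1 < u (s1, \<theta>1)"
    using \<open>0 < u (s1, \<theta>1)\<close> radial_harmonic_nonneg[of s1]
    unfolding \<epsilon>_def by (simp_all add: field_simps)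
  obtain R where R: "max ((M + 1) / \<epsilon>) (radial_harmonic s1) < radial_harmonic R"
    using unbounded by (meson bdd_above.I2 not_le rangeI)
  then have "0 \<le> R" and "s1 < R" and "M + 1 < \<epsilon> * radial_harmonic R"
    using radial_harmonic_mono[of R s1] \<open>0 < \<epsilon>\<close> \<open>0 \<le> s1\<close> by (force simp: field_simps)+
  define \<delta> where "\<delta> = 1 / (radial_subharmonic R + 1)"
  have "0 < \<delta>" "\<delta> * radial_subharmonic R < 1"
    using radial_subharmonic_nonneg[of R] unfolding \<delta>_def by (simp_all add: field_simps)
  obtain s0 \<theta>0 where s0: "s0 \<in> {0..R}"
    and max: "\<And>s \<theta>. s \<in> {0..R} \<Longrightarrow> perturbed \<epsilon> \<delta> u (s, \<theta>) \<le> perturbed \<epsilon> \<delta> u (s0, \<theta>0)"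
    using perturbed_attains_sup[OF u \<open>0 \<le> R\<close>, where \<epsilon> = \<epsilon> and \<delta> = \<delta>] by blast
  have "0 < perturbed \<epsilon> \<delta> u (s1, \<theta>1)"
    using \<open>\<epsilon> * radial_harmonic s1 < u (s1, \<theta>1)\<close> \<open>0 < \<delta>\<close> radial_subharmonic_nonneg[of s1]
    unfolding perturbed_def by (simp add: add_pos_nonneg)
  then have "0 < perturbed \<epsilon> \<delta> u (s0, \<theta>0)"
    using max[of s1 \<theta>1] \<open>s1 < R\<close> \<open>0 \<le> s1\<close> by simp
  moreover have "perturbed \<epsilon> \<delta> u (0, \<theta>0) = 0"
    unfolding perturbed_def radial_harmonic_def radial_subharmonic_def by (simp add: boundary)
  moreover have "perturbed \<epsilon> \<delta> u (R, \<theta>0) < 0"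
    using M[of "(R, \<theta>0)"] \<open>M + 1 < \<epsilon> * radial_harmonic R\<close> \<open>\<delta> * radial_subharmonic R < 1\<close>
      \<open>s1 < R\<close> \<open>0 \<le> s1\<close>
    unfolding perturbed_def by simp
  ultimately have "0 < s0" "s0 < R"
    using s0 by (auto simp: order_le_less)
  then show False
    using perturbed_harmonic_no_interior_max[of u \<delta> s0 R \<epsilon> \<theta>0] u \<open>0 < \<delta>\<close> max
    unfolding bdd_harmonic_end_def by auto
qed

lemma parabolic_end_if_radial_harmonic_unbounded:
  assumes "\<not> bdd_above (range radial_harmonic)"
  shows "parabolic_end w"
  unfolding parabolic_end_def
proof (intro allI impI)
  fix u v :: "real \<times> real \<Rightarrow> real" and s \<theta> :: real
  assume u: "bdd_harmonic_end w u" and v: "bdd_harmonic_end w v"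
    and boundary: "\<forall>\<theta>. u (0, \<theta>) = v (0, \<theta>)" and "0 \<le> s"
  have "u (s, \<theta>) - v (s, \<theta>) \<le> 0"
    using bdd_harmonic_end_nonpos[OF assms bdd_harmonic_end_diff[OF u v]] boundary \<open>0 \<le> s\<close> by simp
  moreover have "v (s, \<theta>) - u (s, \<theta>) \<le> 0"
    using bdd_harmonic_end_nonpos[OF assms bdd_harmonic_end_diff[OF v u]] boundary \<open>0 \<le> s\<close> by simp
  ultimately show "u (s, \<theta>) = v (s, \<theta>)"
    by simp
qed

end

lemma wk_pos:
  assumes "0 < \<gamma>1 s" and "\<kappa> = -1 \<Longrightarrow> 0 < \<gamma>2 s"
  shows "0 < wk \<kappa> \<gamma>1 \<gamma>2 s"
  using assms by (auto simp: wk_def add_pos_nonneg)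

lemma continuous_on_wk:
  assumes "continuous_on S \<gamma>1" "continuous_on S \<gamma>2" and "\<kappa> = -1 \<Longrightarrow> \<forall>s\<in>S. \<gamma>2 s \<noteq> 0"
  shows "continuous_on S (wk \<kappa> \<gamma>1 \<gamma>2)"
proof -
  have "0 < 1 + (\<gamma>1 s)\<^sup>2 + (\<gamma>2 s)\<^sup>2" for s
    by (simp add: add_pos_nonneg)
  then have "1 + (\<gamma>1 s)\<^sup>2 + (\<gamma>2 s)\<^sup>2 \<noteq> 0" for s
    by (metis less_irrefl)
  then show ?thesis
    unfolding wk_def using assms by (cases "\<kappa> = -1"; cases "\<kappa> = 0") (auto intro!: continuous_intros)
qed

theorem corollary2p17:
  fixes \<kappa> :: int and \<gamma>1 \<gamma>2 :: "real \<Rightarrow> real" and D1 D2 :: "nat \<Rightarrow> real \<Rightarrow> real"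
  assumes kappa: "\<kappa> \<in> {-1, 0, 1}"
    and smooth1: "smooth_on {0..} \<gamma>1 D1"
    and smooth2: "smooth_on {0..} \<gamma>2 D2"
    and pos1: "\<forall>s\<ge>0. \<gamma>1 s > 0"
    and halfspace: "\<kappa> = -1 \<Longrightarrow> \<forall>s\<ge>0. \<gamma>2 s > 0"
    and arclength: "\<forall>s\<ge>0. eta \<kappa> (\<gamma>1 s) 0 (\<gamma>2 s) * ((D1 1 s)^2 + (D2 1 s)^2) = 1"
    and divergent: "(\<integral>\<^sup>+ t\<in>{1..}. ennreal (t / integral {0..t} (wk \<kappa> \<gamma>1 \<gamma>2)) \<partial>lborel) = \<infinity>"
  shows "parabolic_end (wk \<kappa> \<gamma>1 \<gamma>2)"
proof -
  interpret warped_end "wk \<kappa> \<gamma>1 \<gamma>2"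
  proof
    show "continuous_on {0..} (wk \<kappa> \<gamma>1 \<gamma>2)"
      using smooth1 smooth2 halfspace
      by (intro continuous_on_wk smooth_on_imp_continuous_on) force+
    show "0 < wk \<kappa> \<gamma>1 \<gamma>2 s" if "0 \<le> s" for s
      using pos1 halfspace that by (intro wk_pos) auto
  qed
  show ?thesis
    using divergent unfolding end_area_def[symmetric]
    by (intro parabolic_end_if_radial_harmonic_unbounded radial_harmonic_unbounded)
qed

end
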